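(* Let $f$ be a probability density on $\mathbb{R}$ which is a scale mixture of normals, let $G$ be an absolutely continuous cumulative distribution function on $\mathbb{R}$ symmetric about $0$, and let $\omega$ be an odd function with $\omega(x)>0$ for $x>0$. Let $\mathbf{x}=(x_1,\dots,x_n)$ be an i.i.d. sample from the density $$s_{f;G}(x;\mu,\sigma,\lambda)=\frac{2}{\sigma}f\left(\frac{x-\mu}{\sigma}\right)G\left(\lambda\,\omega\left(\frac{x-\mu}{\sigma}\right)\right),\quad x\in\mathbb{R},$$ with $\mu\in\mathbb{R}$, $\sigma>0$, $\lambda\in\mathbb{R}$, and consider the (improper) prior $\pi(\mu,\sigma,\lambda)=p(\lambda)/\sigma$ on $\mathbb{R}\times(0,\infty)\times\mathbb{R}$, where $p$ is a proper probability density on $\mathbb{R}$. Then the posterior distribution of $(\mu,\sigma,\lambda)$ is proper, i.e. $\int_{\mathbb{R}}\int_0^\infty\int_{\mathbb{R}}\prod_{j=1}^n s_{f;G}(x_j;\mu,\sigma,\lambda)\,\frac{p(\lambda)}{\sigma}\,d\mu\,d\sigma\,d\lambda<\infty$, provided $n\ge 2$ and all the observations $x_1,\dots,x_n$ are distinct.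
   Context: A density $f$ on $\mathbb{R}$ is a scale mixture of normals if $f(x)=\int_{(0,\infty)}\frac{1}{\tau}\phi\left(\frac{x}{\tau}\right)\,dH(\tau)$ for some probability distribution $H$ on $(0,\infty)$, where $\phi$ is the standard normal density (e.g. normal, logistic, Laplace, Student-$t$). *)

theory Defs
  imports "HOL-Probability.Probability"
begin

text \<open>Densities are determined up to Lebesgue null sets, and the mixture integral may be
  +\<infinity> at x = 0, so the identity is required almost everywhere (as extended reals).\<close>
definition scale_mixture_of_normals :: "(real \<Rightarrow> real) \<Rightarrow> bool" where
  "scale_mixture_of_normals f \<longleftrightarrow>
     f \<in> borel_measurable borel \<and> (\<forall>x. 0 \<le> f x) \<and>
     (\<exists>H :: real measure. prob_space H \<and> sets H = sets borel \<and> emeasure H {0<..} = 1 \<and>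
        (AE x in lborel. ennreal (f x) =
           (\<integral>\<^sup>+ \<tau>. ennreal (std_normal_density (x / \<tau>) / \<tau>) \<partial>H)))"

definition abs_cont_cdf :: "(real \<Rightarrow> real) \<Rightarrow> bool" where
  "abs_cont_cdf G \<longleftrightarrow>
     (\<exists>M. real_distribution M \<and> absolutely_continuous lborel M \<and> G = cdf M)"

definition prob_density :: "(real \<Rightarrow> real) \<Rightarrow> bool" where
  "prob_density p \<longleftrightarrow> p \<in> borel_measurable borel \<and> (\<forall>x. 0 \<le> p x) \<and>
     (\<integral>\<^sup>+ x. ennreal (p x) \<partial>lborel) = 1"

definition skew_dens ::
  "(real \<Rightarrow> real) \<Rightarrow> (real \<Rightarrow> real) \<Rightarrow> (real \<Rightarrow> real) \<Rightarrow> real \<Rightarrow> real \<Rightarrow> real \<Rightarrow> real \<Rightarrow> real" where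
  "skew_dens f G \<omega> \<mu> \<sigma> l y =
     2 / \<sigma> * f ((y - \<mu>) / \<sigma>) * G (l * \<omega> ((y - \<mu>) / \<sigma>))"

end

theory Submission
  imports Defs
begin

text \<open>Since \<open>\<phi>(y/\<tau>)/\<tau> \<le> 1/\<bar>y\<bar>\<close> for every \<open>\<tau>\<close>, a scale mixture of normals \<open>f\<close> is almost
  everywhere bounded by \<open>1/\<bar>y\<bar>\<close>. The skewing factor \<open>G(\<dots>)\<close> is at most \<open>1\<close> and \<open>p\<close> integrates
  to \<open>1\<close>, so it suffices to bound \<open>\<integral>\<^sub>0\<^sup>\<infinity> \<integral> \<Prod>\<^sub>j (2/\<sigma>) f((x\<^sub>j - \<mu>)/\<sigma>) d\<mu> d\<sigma>/\<sigma>\<close>.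
  If \<open>\<delta>\<close> is the least spacing of the sample, at most one observation lies within \<open>\<delta>/2\<close> of a
  given \<open>\<mu>\<close>, so all but two factors are at most \<open>4/\<delta>\<close>. For a pair \<open>a \<noteq> b\<close> the substitutions
  \<open>\<mu> = a + \<sigma>u\<close> and \<open>\<sigma> \<mapsto> \<bar>b - a\<bar>/\<sigma>\<close> bound \<open>\<integral>\<integral> f((a-\<mu>)/\<sigma>) f((b-\<mu>)/\<sigma>)/\<sigma>\<^sup>3 d\<mu> d\<sigma>\<close>
  by \<open>(\<integral>f)\<^sup>2/\<bar>b - a\<bar>\<close>.\<close>

lemma nn_integral_inverse_subst_interval_le:
  fixes k :: "real \<Rightarrow> real" and c A B :: real
  assumes [measurable]: "k \<in> borel_measurable borel" and k0: "\<And>t. 0 \<le> k t"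
    and c: "c > 0" and AB: "0 < A" "A \<le> B"
  shows "(\<integral>\<^sup>+\<sigma>\<in>{A..B}. ennreal (k (c / \<sigma>) / \<sigma>\<^sup>2) \<partial>lborel)
     \<le> ennreal (1 / c) * (\<integral>\<^sup>+t. ennreal (k t) \<partial>lborel)"
proof -
  have deriv: "((\<lambda>s. - c / s) has_real_derivative c / s\<^sup>2) (at s)" if "s \<in> {A..B}" for s
    using that AB by (auto intro!: derivative_eq_intros simp: power2_eq_square field_simps)
  have cont: "continuous_on {A..B} (\<lambda>s. c / s\<^sup>2)"
    using AB by (intro continuous_intros) auto
  have "(\<integral>\<^sup>+\<sigma>\<in>{A..B}. ennreal (k (c / \<sigma>) / \<sigma>\<^sup>2) \<partial>lborel)
      = (\<integral>\<^sup>+\<sigma>. ennreal (k (- (- c / \<sigma>)) / c * (c / \<sigma>\<^sup>2) * indicator {A..B} \<sigma>) \<partial>lborel)"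
    using c by (intro nn_integral_cong) (auto simp: indicator_def)
  also have "\<dots> = (\<integral>\<^sup>+y. ennreal (k (- y) / c * indicator {- c / A..- c / B} y) \<partial>lborel)"
    by (rule nn_integral_substitution[where g="\<lambda>s. - c / s" and f="\<lambda>y. k (- y) / c", symmetric])
       (use AB c deriv cont in \<open>auto simp: set_borel_measurable_def\<close>)
  also have "\<dots> \<le> (\<integral>\<^sup>+y. ennreal (1 / c) * ennreal (k (- y)) \<partial>lborel)"
    using c k0 by (intro nn_integral_mono) (auto simp: indicator_def ennreal_mult'[symmetric])
  also have "\<dots> = ennreal (1 / c) * (\<integral>\<^sup>+y. ennreal (k (- y)) \<partial>lborel)"
    by (rule nn_integral_cmult) measurable
  also have "(\<integral>\<^sup>+y. ennreal (k (- y)) \<partial>lborel) = (\<integral>\<^sup>+t. ennreal (k t) \<partial>lborel)"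
    using nn_integral_real_affine[of "\<lambda>t. ennreal (k t)" "-1" 0] by simp
  finally show ?thesis .
qed

lemma nn_integral_inverse_subst_le:
  fixes k :: "real \<Rightarrow> real" and c :: real
  assumes [measurable]: "k \<in> borel_measurable borel" and k0: "\<And>t. 0 \<le> k t" and c: "c > 0"
  shows "(\<integral>\<^sup>+\<sigma>\<in>{0<..}. ennreal (k (c / \<sigma>) / \<sigma>\<^sup>2) \<partial>lborel)
     \<le> ennreal (1 / c) * (\<integral>\<^sup>+t. ennreal (k t) \<partial>lborel)"
proof -
  define F where "F i \<sigma> = ennreal (k (c / \<sigma>) / \<sigma>\<^sup>2) * indicator {1 / Suc i..Suc i} \<sigma>"
    for i :: nat and \<sigma>
  have "incseq F"
  proof (intro incseq_SucI le_funI)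
    fix i \<sigma>
    have "1 / real (Suc (Suc i)) \<le> 1 / real (Suc i)" by (simp add: frac_le)
    then show "F i \<sigma> \<le> F (Suc i) \<sigma>"
      unfolding F_def by (intro mult_left_mono) (auto simp: indicator_def)
  qed
  have "(\<integral>\<^sup>+\<sigma>\<in>{0<..}. ennreal (k (c / \<sigma>) / \<sigma>\<^sup>2) \<partial>lborel) \<le> (\<integral>\<^sup>+\<sigma>. (SUP i. F i \<sigma>) \<partial>lborel)"
  proof (intro nn_integral_mono)
    fix \<sigma> :: real
    show "ennreal (k (c / \<sigma>) / \<sigma>\<^sup>2) * indicator {0<..} \<sigma> \<le> (SUP i. F i \<sigma>)"
    proof (cases "\<sigma> > 0")
      case True
      obtain m :: nat where m: "\<sigma> \<le> m" "1 / \<sigma> \<le> m"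
        using real_arch_simple[of "max \<sigma> (1 / \<sigma>)"] by auto
      have "1 / real (Suc m) \<le> \<sigma>"
        using True m by (auto simp: field_simps)
      then have "F m \<sigma> = ennreal (k (c / \<sigma>) / \<sigma>\<^sup>2) * indicator {0<..} \<sigma>"
        using True m unfolding F_def by (auto simp: indicator_def)
      then show ?thesis by (metis SUP_upper UNIV_I)
    qed auto
  qed
  also have "\<dots> = (SUP i. (\<integral>\<^sup>+\<sigma>. F i \<sigma> \<partial>lborel))"
    by (rule nn_integral_monotone_convergence_SUP[OF \<open>incseq F\<close>]) (unfold F_def, measurable)
  also have "\<dots> \<le> ennreal (1 / c) * (\<integral>\<^sup>+t. ennreal (k t) \<partial>lborel)"
    unfolding F_def
    by (intro SUP_least nn_integral_inverse_subst_interval_le k0 c) (auto simp: field_simps)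
  finally show ?thesis .
qed

lemma nn_integral_location_pair_eq:
  fixes h :: "real \<Rightarrow> real" and a b \<sigma> :: real
  assumes [measurable]: "h \<in> borel_measurable borel" and h0: "\<And>t. 0 \<le> h t" and \<sigma>: "\<sigma> > 0"
  shows "(\<integral>\<^sup>+\<mu>. ennreal (h ((a - \<mu>) / \<sigma>) * h ((b - \<mu>) / \<sigma>) / \<sigma> ^ 3) \<partial>lborel)
    = (\<integral>\<^sup>+u. ennreal (h (- u)) * ennreal (h ((b - a) / \<sigma> - u) / \<sigma>\<^sup>2) \<partial>lborel)"
proof -
  have "(\<integral>\<^sup>+\<mu>. ennreal (h ((a - \<mu>) / \<sigma>) * h ((b - \<mu>) / \<sigma>) / \<sigma> ^ 3) \<partial>lborel)
      = ennreal \<bar>\<sigma>\<bar> * (\<integral>\<^sup>+u. ennreal (h ((a - (a + \<sigma> * u)) / \<sigma>) * h ((b - (a + \<sigma> * u)) / \<sigma>) / \<sigma> ^ 3) \<partial>lborel)"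
    using \<sigma> by (intro nn_integral_real_affine) auto
  also have "\<dots> = (\<integral>\<^sup>+u. ennreal \<sigma> * ennreal (h ((a - (a + \<sigma> * u)) / \<sigma>) * h ((b - (a + \<sigma> * u)) / \<sigma>) / \<sigma> ^ 3) \<partial>lborel)"
    using \<sigma> by (subst nn_integral_cmult) auto
  also have "\<dots> = (\<integral>\<^sup>+u. ennreal (h (- u)) * ennreal (h ((b - a) / \<sigma> - u) / \<sigma>\<^sup>2) \<partial>lborel)"
  proof (intro nn_integral_cong)
    fix u :: real
    have "(a - (a + \<sigma> * u)) / \<sigma> = - u" "(b - (a + \<sigma> * u)) / \<sigma> = (b - a) / \<sigma> - u"
      using \<sigma> by (auto simp: field_simps)
    then show "ennreal \<sigma> * ennreal (h ((a - (a + \<sigma> * u)) / \<sigma>) * h ((b - (a + \<sigma> * u)) / \<sigma>) / \<sigma> ^ 3)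
        = ennreal (h (- u)) * ennreal (h ((b - a) / \<sigma> - u) / \<sigma>\<^sup>2)"
      using \<sigma> h0[of "- u"] h0[of "(b - a) / \<sigma> - u"]
      by (simp add: ennreal_mult'[symmetric] power2_eq_square power3_eq_cube field_simps)
  qed
  finally show ?thesis .
qed

lemma nn_integral_location_scale_pair_le:
  fixes h :: "real \<Rightarrow> real" and a b :: real
  assumes hm[measurable]: "h \<in> borel_measurable borel" and h0: "\<And>t. 0 \<le> h t" and "a \<noteq> b"
  shows "(\<integral>\<^sup>+\<sigma>\<in>{0<..}. (\<integral>\<^sup>+\<mu>. ennreal (h ((a - \<mu>) / \<sigma>) * h ((b - \<mu>) / \<sigma>) / \<sigma> ^ 3) \<partial>lborel) \<partial>lborel)
    \<le> ennreal (1 / \<bar>b - a\<bar>) * (\<integral>\<^sup>+t. ennreal (h t) \<partial>lborel)\<^sup>2"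
proof -
  define I where "I = (\<integral>\<^sup>+t. ennreal (h t) \<partial>lborel)"
  have le: "(\<integral>\<^sup>+\<sigma>\<in>{0<..}. (\<integral>\<^sup>+\<mu>. ennreal (h ((a - \<mu>) / \<sigma>) * h ((b - \<mu>) / \<sigma>) / \<sigma> ^ 3) \<partial>lborel) \<partial>lborel)
    \<le> ennreal (1 / (b - a)) * I\<^sup>2" if "a < b" for a b
  proof -
    have "(\<integral>\<^sup>+\<sigma>\<in>{0<..}. (\<integral>\<^sup>+\<mu>. ennreal (h ((a - \<mu>) / \<sigma>) * h ((b - \<mu>) / \<sigma>) / \<sigma> ^ 3) \<partial>lborel) \<partial>lborel)
      = (\<integral>\<^sup>+\<sigma>. (\<integral>\<^sup>+u. ennreal (h (- u)) * (ennreal (h ((b - a) / \<sigma> - u) / \<sigma>\<^sup>2) * indicator {0<..} \<sigma>) \<partial>lborel) \<partial>lborel)"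
    proof (intro nn_integral_cong)
      fix \<sigma> :: real
      show "(\<integral>\<^sup>+\<mu>. ennreal (h ((a - \<mu>) / \<sigma>) * h ((b - \<mu>) / \<sigma>) / \<sigma> ^ 3) \<partial>lborel) * indicator {0<..} \<sigma>
        = (\<integral>\<^sup>+u. ennreal (h (- u)) * (ennreal (h ((b - a) / \<sigma> - u) / \<sigma>\<^sup>2) * indicator {0<..} \<sigma>) \<partial>lborel)"
        by (cases "\<sigma> > 0") (simp_all add: nn_integral_location_pair_eq[OF hm h0])
    qed
    also have "\<dots> = (\<integral>\<^sup>+u. ennreal (h (- u)) * (\<integral>\<^sup>+\<sigma>\<in>{0<..}. ennreal (h ((b - a) / \<sigma> - u) / \<sigma>\<^sup>2) \<partial>lborel) \<partial>lborel)"
      by (subst lborel_pair.Fubini') (measurable, simp add: nn_integral_cmult)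
    also have "\<dots> \<le> (\<integral>\<^sup>+u. ennreal (h (- u)) * (ennreal (1 / (b - a)) * I) \<partial>lborel)"
    proof (intro nn_integral_mono mult_left_mono)
      fix u :: real
      have "(\<integral>\<^sup>+t. ennreal (h (t - u)) \<partial>lborel) = I"
        unfolding I_def using nn_integral_real_affine[of "\<lambda>t. ennreal (h t)" 1 "- u"] by simp
      then show "(\<integral>\<^sup>+\<sigma>\<in>{0<..}. ennreal (h ((b - a) / \<sigma> - u) / \<sigma>\<^sup>2) \<partial>lborel) \<le> ennreal (1 / (b - a)) * I"
        using nn_integral_inverse_subst_le[of "\<lambda>t. h (t - u)" "b - a"] h0 \<open>a < b\<close> by auto
    qed auto
    also have "\<dots> = ennreal (1 / (b - a)) * I\<^sup>2"
    proof -
      have "(\<integral>\<^sup>+u. ennreal (h (- u)) \<partial>lborel) = I"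
        unfolding I_def using nn_integral_real_affine[of "\<lambda>t. ennreal (h t)" "-1" 0] by simp
      then show ?thesis
        by (subst nn_integral_multc) (auto simp: power2_eq_square mult_ac)
    qed
    finally show ?thesis .
  qed
  show ?thesis
  proof (cases "a < b")
    case True
    then show ?thesis using le[OF True] by (simp add: I_def)
  next
    case False
    then have "b < a" using \<open>a \<noteq> b\<close> by simp
    then show ?thesis using le[OF \<open>b < a\<close>] by (simp add: I_def mult.commute)
  qed
qed

lemma std_normal_density_scale_le:
  fixes y \<tau> :: real
  assumes "y \<noteq> 0"
  shows "std_normal_density (y / \<tau>) / \<tau> \<le> 1 / \<bar>y\<bar>"
proof (cases "\<tau> > 0")
  case False
  then have "std_normal_density (y / \<tau>) / \<tau> \<le> 0"
    by (intro divide_nonneg_nonpos) auto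
  then show ?thesis by (meson order_trans zero_le_divide_1_iff abs_ge_zero)
next
  case True
  define s where "s = \<bar>y\<bar> / \<tau>"
  have s: "s > 0" using True assms by (simp add: s_def)
  have "s \<le> 1 + s\<^sup>2 / 2"
    using sum_squares_ge_zero[of "s - 1" 0] by (simp add: power2_eq_square field_simps)
  also have "\<dots> \<le> exp (s\<^sup>2 / 2)" by (rule exp_ge_add_one_self)
  finally have "s * exp (- (s\<^sup>2) / 2) \<le> 1"
    by (simp add: exp_minus field_simps)
  moreover have "s * exp (- (s\<^sup>2) / 2) / sqrt (2 * pi) \<le> s * exp (- (s\<^sup>2) / 2)"
    using s pi_gt3 divide_left_mono[of 1 "sqrt (2 * pi)" "s * exp (- (s\<^sup>2) / 2)"]
    by (simp add: real_le_rsqrt)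
  ultimately have "s * exp (- (s\<^sup>2) / 2) / sqrt (2 * pi) \<le> 1"
    by linarith
  then have "s * exp (- (s\<^sup>2) / 2) / sqrt (2 * pi) / \<bar>y\<bar> \<le> 1 / \<bar>y\<bar>"
    by (rule divide_right_mono) simp
  also have "s * exp (- (s\<^sup>2) / 2) / sqrt (2 * pi) / \<bar>y\<bar> = std_normal_density (y / \<tau>) / \<tau>"
    using True assms by (simp add: std_normal_density_def s_def power2_eq_square field_simps)
  finally show ?thesis .
qed

lemma nn_integral_std_normal_scale_le:
  fixes \<tau> :: real
  shows "(\<integral>\<^sup>+t. ennreal (std_normal_density (t / \<tau>) / \<tau>) \<partial>lborel) \<le> 1"
proof (cases "\<tau> > 0")
  case True
  have "(\<integral>\<^sup>+t. ennreal (std_normal_density (t / \<tau>) / \<tau>) \<partial>lborel)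
      = ennreal \<bar>\<tau>\<bar> * (\<integral>\<^sup>+u. ennreal (std_normal_density ((0 + \<tau> * u) / \<tau>) / \<tau>) \<partial>lborel)"
    using True by (intro nn_integral_real_affine) auto
  also have "\<dots> = (\<integral>\<^sup>+u. ennreal \<tau> * ennreal (std_normal_density u / \<tau>) \<partial>lborel)"
    using True by (subst nn_integral_cmult) auto
  also have "\<dots> = (\<integral>\<^sup>+u. ennreal (std_normal_density u) \<partial>lborel)"
    using True by (intro nn_integral_cong) (simp add: ennreal_mult'[symmetric])
  also have "\<dots> = 1"
    by (subst nn_integral_eq_integral) auto
  finally show ?thesis by simp
next
  case False
  then have "std_normal_density (t / \<tau>) / \<tau> \<le> 0" for t
    by (intro divide_nonneg_nonpos) auto
  then show ?thesis
    by (subst nn_integral_cong[where v="\<lambda>_. 0"]) (auto simp: ennreal_eq_0_iff)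
qed

lemma nn_integral_std_normal_scale_mixture_le:
  assumes "prob_space H" and sH: "sets H = sets borel"
  shows "(\<integral>\<^sup>+t. (\<integral>\<^sup>+\<tau>. ennreal (std_normal_density (t / \<tau>) / \<tau>) \<partial>H) \<partial>lborel) \<le> 1"
proof -
  interpret H: prob_space H by fact
  interpret lborel_H: pair_sigma_finite lborel H ..
  have "(\<integral>\<^sup>+t. (\<integral>\<^sup>+\<tau>. ennreal (std_normal_density (t / \<tau>) / \<tau>) \<partial>H) \<partial>lborel)
      = (\<integral>\<^sup>+\<tau>. (\<integral>\<^sup>+t. ennreal (std_normal_density (t / \<tau>) / \<tau>) \<partial>lborel) \<partial>H)"
  proof (rule lborel_H.Fubini'[symmetric])
    have "(\<lambda>(t, \<tau>). ennreal (std_normal_density (t / \<tau>) / \<tau>)) \<in> borel_measurable (borel \<Otimes>\<^sub>M borel)"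
      by measurable
    then show "(\<lambda>(t, \<tau>). ennreal (std_normal_density (t / \<tau>) / \<tau>)) \<in> borel_measurable (lborel \<Otimes>\<^sub>M H)"
      by (subst measurable_cong_sets[OF sets_pair_measure_cong[OF sets_lborel sH] refl])
  qed
  also have "\<dots> \<le> (\<integral>\<^sup>+\<tau>. 1 \<partial>H)"
    by (intro nn_integral_mono nn_integral_std_normal_scale_le)
  also have "\<dots> = 1" by (simp add: H.emeasure_space_1)
  finally show ?thesis .
qed

lemma scale_mixture_of_normals_dominated:
  assumes "scale_mixture_of_normals f"
  obtains h where "h \<in> borel_measurable borel" "\<And>t. 0 \<le> h t"
    "\<And>y. y \<noteq> 0 \<Longrightarrow> h y \<le> 1 / \<bar>y\<bar>" "(\<integral>\<^sup>+t. ennreal (h t) \<partial>lborel) \<le> 1"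
    "AE y in lborel. f y = h y"
proof -
  from assms obtain H :: "real measure" where [measurable]: "f \<in> borel_measurable borel"
    and f0: "\<And>y. 0 \<le> f y" and "prob_space H" and sH: "sets H = sets borel"
    and mix: "AE y in lborel. ennreal (f y) = (\<integral>\<^sup>+\<tau>. ennreal (std_normal_density (y / \<tau>) / \<tau>) \<partial>H)"
    unfolding scale_mixture_of_normals_def by blast
  interpret H: prob_space H by fact
  have "AE y in lborel. y \<noteq> 0 \<longrightarrow> f y \<le> 1 / \<bar>y\<bar>"
    using mix
  proof eventually_elim
    case (elim y)
    show ?case
    proof
      assume "y \<noteq> 0"
      have "ennreal (f y) \<le> (\<integral>\<^sup>+\<tau>. ennreal (1 / \<bar>y\<bar>) \<partial>H)"
        unfolding elim using std_normal_density_scale_le[OF \<open>y \<noteq> 0\<close>]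
        by (intro nn_integral_mono ennreal_leI)
      then show "f y \<le> 1 / \<bar>y\<bar>"
        by (simp add: H.emeasure_space_1 ennreal_le_iff)
    qed
  qed
  \<comment> \<open>\<open>f\<close> obeys the bound only almost everywhere, so it is truncated to a version obeying it everywhere.\<close>
  define h where "h y = (if y = 0 then 0 else min (f y) (1 / \<bar>y\<bar>))" for y
  have hm: "h \<in> borel_measurable borel"
    unfolding h_def by measurable
  have ae: "AE y in lborel. f y = h y"
    using \<open>AE y in lborel. y \<noteq> 0 \<longrightarrow> f y \<le> 1 / \<bar>y\<bar>\<close> AE_lborel_singleton[of 0]
    by eventually_elim (auto simp: h_def)
  have "(\<integral>\<^sup>+t. ennreal (h t) \<partial>lborel) = (\<integral>\<^sup>+t. (\<integral>\<^sup>+\<tau>. ennreal (std_normal_density (t / \<tau>) / \<tau>) \<partial>H) \<partial>lborel)"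
    using ae mix by (intro nn_integral_cong_AE) auto
  also have "\<dots> \<le> 1"
    by (rule nn_integral_std_normal_scale_mixture_le) fact+
  finally have "(\<integral>\<^sup>+t. ennreal (h t) \<partial>lborel) \<le> 1" .
  then show ?thesis
    by (rule that[OF hm _ _ _ ae, rotated 2]) (auto simp: h_def f0)
qed

lemma inj_on_separated:
  fixes x :: "'a \<Rightarrow> real"
  assumes "finite A" "inj_on x A"
  obtains \<delta> where "\<delta> > 0" "\<And>i j. i \<in> A \<Longrightarrow> j \<in> A \<Longrightarrow> i \<noteq> j \<Longrightarrow> \<delta> \<le> \<bar>x i - x j\<bar>"
proof -
  define D where "D = (\<lambda>(i, j). \<bar>x i - x j\<bar>) ` (A \<times> A - Id)"
  have "finite D" using \<open>finite A\<close> by (simp add: D_def)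
  show ?thesis
  proof (rule that[of "Min (insert 1 D)"])
    have "d > 0" if "d \<in> D" for d
      using that inj_on_eq_iff[OF \<open>inj_on x A\<close>] by (auto simp: D_def)
    then show "Min (insert 1 D) > 0"
      using \<open>finite D\<close> by (simp add: Min_gr_iff)
    show "Min (insert 1 D) \<le> \<bar>x i - x j\<bar>" if "i \<in> A" "j \<in> A" "i \<noteq> j" for i j
      using \<open>finite D\<close> that by (intro Min_le) (auto simp: D_def)
  qed
qed

lemma prod_location_scale_le_sum_pairs:
  fixes h :: "real \<Rightarrow> real" and x :: "nat \<Rightarrow> real" and n :: nat and \<sigma> \<mu> \<delta> :: real
  assumes h0: "\<And>t. 0 \<le> h t" and hb: "\<And>y. y \<noteq> 0 \<Longrightarrow> h y \<le> 1 / \<bar>y\<bar>"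
    and \<sigma>: "\<sigma> > 0" and n: "n \<ge> 2" and \<delta>: "\<delta> > 0"
    and sep: "\<And>i j. i < n \<Longrightarrow> j < n \<Longrightarrow> i \<noteq> j \<Longrightarrow> \<delta> \<le> \<bar>x i - x j\<bar>"
  shows "(\<Prod>j<n. 2 / \<sigma> * h ((x j - \<mu>) / \<sigma>)) / \<sigma>
    \<le> (\<Sum>(a, b)\<in>{..<n} \<times> {..<n} - Id.
          4 * (4 / \<delta>) ^ (n - 2) * (h ((x a - \<mu>) / \<sigma>) * h ((x b - \<mu>) / \<sigma>) / \<sigma> ^ 3))"
proof -
  obtain a b where ab: "a < n" "b < n" "a \<noteq> b"
    and far: "\<And>j. j < n \<Longrightarrow> j \<noteq> a \<Longrightarrow> j \<noteq> b \<Longrightarrow> \<delta> / 2 \<le> \<bar>x j - \<mu>\<bar>"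
  proof (cases "\<exists>m<n. \<bar>x m - \<mu>\<bar> < \<delta> / 2")
    case True
    then obtain m where m: "m < n" "\<bar>x m - \<mu>\<bar> < \<delta> / 2" by blast
    show ?thesis
    proof (rule that[of m "if m = 0 then 1 else 0"])
      fix j assume "j < n" "j \<noteq> m"
      then have "\<delta> \<le> \<bar>x j - x m\<bar>" using sep m by auto
      then show "\<delta> / 2 \<le> \<bar>x j - \<mu>\<bar>" using m by linarith
    qed (use m n in auto)
  next
    case False
    then show ?thesis using n by (intro that[of 0 1]) auto
  qed
  define g where "g j = 2 / \<sigma> * h ((x j - \<mu>) / \<sigma>)" for j
  define R where "R = {..<n} - {a, b}"
  have g0: "0 \<le> g j" for j using h0 \<sigma> by (simp add: g_def)
  have gR: "g j \<le> 4 / \<delta>" if "j \<in> R" for j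
  proof -
    have d: "\<delta> / 2 \<le> \<bar>x j - \<mu>\<bar>" using far that by (auto simp: R_def)
    then have "(x j - \<mu>) / \<sigma> \<noteq> 0" using \<delta> \<sigma> by auto
    then have "g j \<le> 2 / \<sigma> * (1 / \<bar>(x j - \<mu>) / \<sigma>\<bar>)"
      unfolding g_def using \<sigma> by (intro mult_left_mono hb) auto
    also have "\<dots> = 2 / \<bar>x j - \<mu>\<bar>" using \<sigma> by (simp add: abs_divide field_simps)
    also have "\<dots> \<le> 2 / (\<delta> / 2)" using d \<delta> by (intro divide_left_mono) (auto intro!: mult_pos_pos)
    finally show ?thesis by simp
  qed
  have "{..<n} = insert a (insert b R)" using ab by (auto simp: R_def)
  then have "(\<Prod>j<n. g j) = prod g (insert a (insert b R))" by simp
  also have "\<dots> = g a * g b * prod g R"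
    using ab by (simp add: R_def mult.assoc)
  also have "\<dots> \<le> g a * g b * (4 / \<delta>) ^ (n - 2)"
  proof -
    have "card R = n - 2" using ab by (simp add: R_def card_Diff_subset)
    moreover have "prod g R \<le> (\<Prod>j\<in>R. 4 / \<delta>)" by (intro prod_mono) (use g0 gR in auto)
    ultimately show ?thesis using g0 by (intro mult_left_mono) auto
  qed
  finally have "(\<Prod>j<n. g j) / \<sigma> \<le> g a * g b * (4 / \<delta>) ^ (n - 2) / \<sigma>"
    using \<sigma> by (intro divide_right_mono) auto
  also have "\<dots> = 4 * (4 / \<delta>) ^ (n - 2) * (h ((x a - \<mu>) / \<sigma>) * h ((x b - \<mu>) / \<sigma>) / \<sigma> ^ 3)"
    unfolding g_def using \<sigma> by (simp add: power3_eq_cube field_simps)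
  also have "\<dots> \<le> (\<Sum>(a, b)\<in>{..<n} \<times> {..<n} - Id.
          4 * (4 / \<delta>) ^ (n - 2) * (h ((x a - \<mu>) / \<sigma>) * h ((x b - \<mu>) / \<sigma>) / \<sigma> ^ 3))"
    using member_le_sum[of "(a, b)" "{..<n} \<times> {..<n} - Id"
        "\<lambda>(a, b). 4 * (4 / \<delta>) ^ (n - 2) * (h ((x a - \<mu>) / \<sigma>) * h ((x b - \<mu>) / \<sigma>) / \<sigma> ^ 3)"]
      ab h0 \<sigma> \<delta> by auto
  finally show ?thesis by (simp add: g_def)
qed

lemma nn_integral_location_scale_le_sum_pairs:
  fixes h :: "real \<Rightarrow> real" and x :: "nat \<Rightarrow> real" and n :: nat and \<delta> :: real
  assumes hm[measurable]: "h \<in> borel_measurable borel" and h0: "\<And>t. 0 \<le> h t"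
    and hb: "\<And>y. y \<noteq> 0 \<Longrightarrow> h y \<le> 1 / \<bar>y\<bar>" and n: "n \<ge> 2" and \<delta>: "\<delta> > 0"
    and sep: "\<And>i j. i < n \<Longrightarrow> j < n \<Longrightarrow> i \<noteq> j \<Longrightarrow> \<delta> \<le> \<bar>x i - x j\<bar>"
  shows "(\<integral>\<^sup>+\<sigma>\<in>{0<..}. (\<integral>\<^sup>+\<mu>. ennreal ((\<Prod>j<n. 2 / \<sigma> * h ((x j - \<mu>) / \<sigma>)) / \<sigma>) \<partial>lborel) \<partial>lborel)
    \<le> (\<Sum>q\<in>{..<n} \<times> {..<n} - Id. ennreal (4 * (4 / \<delta>) ^ (n - 2)) *
          (\<integral>\<^sup>+\<sigma>\<in>{0<..}. (\<integral>\<^sup>+\<mu>.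
             ennreal (h ((x (fst q) - \<mu>) / \<sigma>) * h ((x (snd q) - \<mu>) / \<sigma>) / \<sigma> ^ 3) \<partial>lborel) \<partial>lborel))"
proof -
  define P where "P = {..<n} \<times> {..<n} - Id"
  define C where "C = 4 * (4 / \<delta>) ^ (n - 2)"
  define T where "T q \<mu> \<sigma> = h ((x (fst q) - \<mu>) / \<sigma>) * h ((x (snd q) - \<mu>) / \<sigma>) / \<sigma> ^ 3" for q \<mu> \<sigma>
  have C0: "0 \<le> C" using \<delta> by (simp add: C_def)
  have pointwise: "ennreal ((\<Prod>j<n. 2 / \<sigma> * h ((x j - \<mu>) / \<sigma>)) / \<sigma>) \<le> (\<Sum>q\<in>P. ennreal C * ennreal (T q \<mu> \<sigma>))"
    if "\<sigma> > 0" for \<sigma> \<mu>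
  proof -
    have T0: "0 \<le> T q \<mu> \<sigma>" for q using h0 that by (simp add: T_def)
    have "(\<Prod>j<n. 2 / \<sigma> * h ((x j - \<mu>) / \<sigma>)) / \<sigma> \<le> (\<Sum>q\<in>P. C * T q \<mu> \<sigma>)"
      using prod_location_scale_le_sum_pairs[OF h0 hb that n \<delta> sep, where \<mu>=\<mu>]
      by (simp add: P_def C_def T_def case_prod_beta')
    then have "ennreal ((\<Prod>j<n. 2 / \<sigma> * h ((x j - \<mu>) / \<sigma>)) / \<sigma>) \<le> ennreal (\<Sum>q\<in>P. C * T q \<mu> \<sigma>)"
      by (rule ennreal_leI)
    also have "\<dots> = (\<Sum>q\<in>P. ennreal C * ennreal (T q \<mu> \<sigma>))"
      by (subst sum_ennreal[symmetric]) (use C0 T0 in \<open>auto simp: ennreal_mult'\<close>)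
    finally show ?thesis .
  qed
  have "(\<integral>\<^sup>+\<sigma>\<in>{0<..}. (\<integral>\<^sup>+\<mu>. ennreal ((\<Prod>j<n. 2 / \<sigma> * h ((x j - \<mu>) / \<sigma>)) / \<sigma>) \<partial>lborel) \<partial>lborel)
      \<le> (\<integral>\<^sup>+\<sigma>\<in>{0<..}. (\<integral>\<^sup>+\<mu>. (\<Sum>q\<in>P. ennreal C * ennreal (T q \<mu> \<sigma>)) \<partial>lborel) \<partial>lborel)"
  proof (intro nn_integral_mono)
    fix \<sigma> :: real
    show "(\<integral>\<^sup>+\<mu>. ennreal ((\<Prod>j<n. 2 / \<sigma> * h ((x j - \<mu>) / \<sigma>)) / \<sigma>) \<partial>lborel) * indicator {0<..} \<sigma>
      \<le> (\<integral>\<^sup>+\<mu>. (\<Sum>q\<in>P. ennreal C * ennreal (T q \<mu> \<sigma>)) \<partial>lborel) * indicator {0<..} \<sigma>"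
    proof (cases "\<sigma> > 0")
      case True
      then have "(\<integral>\<^sup>+\<mu>. ennreal ((\<Prod>j<n. 2 / \<sigma> * h ((x j - \<mu>) / \<sigma>)) / \<sigma>) \<partial>lborel)
        \<le> (\<integral>\<^sup>+\<mu>. (\<Sum>q\<in>P. ennreal C * ennreal (T q \<mu> \<sigma>)) \<partial>lborel)"
        by (intro nn_integral_mono pointwise)
      then show ?thesis by (rule mult_right_mono) simp
    qed simp
  qed
  also have "\<dots> = (\<Sum>q\<in>P. ennreal C * (\<integral>\<^sup>+\<sigma>\<in>{0<..}. (\<integral>\<^sup>+\<mu>. ennreal (T q \<mu> \<sigma>) \<partial>lborel) \<partial>lborel))"
  proof -
    have "(\<integral>\<^sup>+\<mu>. (\<Sum>q\<in>P. ennreal C * ennreal (T q \<mu> \<sigma>)) \<partial>lborel) * indicator {0<..} \<sigma>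
      = (\<Sum>q\<in>P. ennreal C * ((\<integral>\<^sup>+\<mu>. ennreal (T q \<mu> \<sigma>) \<partial>lborel) * indicator {0<..} \<sigma>))" for \<sigma>
      by (subst nn_integral_sum) (auto simp: T_def sum_distrib_right mult.assoc nn_integral_cmult)
    then have "(\<integral>\<^sup>+\<sigma>\<in>{0<..}. (\<integral>\<^sup>+\<mu>. (\<Sum>q\<in>P. ennreal C * ennreal (T q \<mu> \<sigma>)) \<partial>lborel) \<partial>lborel)
      = (\<integral>\<^sup>+\<sigma>. (\<Sum>q\<in>P. ennreal C * ((\<integral>\<^sup>+\<mu>. ennreal (T q \<mu> \<sigma>) \<partial>lborel) * indicator {0<..} \<sigma>)) \<partial>lborel)"
      by (intro nn_integral_cong) simp
    also have "\<dots> = (\<Sum>q\<in>P. ennreal C * (\<integral>\<^sup>+\<sigma>\<in>{0<..}. (\<integral>\<^sup>+\<mu>. ennreal (T q \<mu> \<sigma>) \<partial>lborel) \<partial>lborel))"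
      by (subst nn_integral_sum) (auto simp: T_def intro!: sum.cong nn_integral_cmult)
    finally show ?thesis .
  qed
  finally show ?thesis unfolding P_def C_def T_def .
qed

lemma nn_integral_location_scale_likelihood_finite:
  fixes h :: "real \<Rightarrow> real" and x :: "nat \<Rightarrow> real" and n :: nat
  assumes hm[measurable]: "h \<in> borel_measurable borel" and h0: "\<And>t. 0 \<le> h t"
    and hb: "\<And>y. y \<noteq> 0 \<Longrightarrow> h y \<le> 1 / \<bar>y\<bar>" and hint: "(\<integral>\<^sup>+t. ennreal (h t) \<partial>lborel) < \<infinity>"
    and n: "n \<ge> 2" and inj: "inj_on x {..<n}"
  shows "(\<integral>\<^sup>+\<sigma>\<in>{0<..}. (\<integral>\<^sup>+\<mu>. ennreal ((\<Prod>j<n. 2 / \<sigma> * h ((x j - \<mu>) / \<sigma>)) / \<sigma>) \<partial>lborel) \<partial>lborel) < \<infinity>"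
proof -
  obtain \<delta> where \<delta>: "\<delta> > 0" and sep: "\<And>i j. i < n \<Longrightarrow> j < n \<Longrightarrow> i \<noteq> j \<Longrightarrow> \<delta> \<le> \<bar>x i - x j\<bar>"
    using inj_on_separated[OF _ inj] by auto
  have pair_finite: "(\<integral>\<^sup>+\<sigma>\<in>{0<..}. (\<integral>\<^sup>+\<mu>.
      ennreal (h ((x (fst q) - \<mu>) / \<sigma>) * h ((x (snd q) - \<mu>) / \<sigma>) / \<sigma> ^ 3) \<partial>lborel) \<partial>lborel) < \<infinity>"
    if "q \<in> {..<n} \<times> {..<n} - Id" for q
  proof -
    have "x (fst q) \<noteq> x (snd q)"
      using that inj_on_eq_iff[OF inj] by auto
    then have "(\<integral>\<^sup>+\<sigma>\<in>{0<..}. (\<integral>\<^sup>+\<mu>.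
        ennreal (h ((x (fst q) - \<mu>) / \<sigma>) * h ((x (snd q) - \<mu>) / \<sigma>) / \<sigma> ^ 3) \<partial>lborel) \<partial>lborel)
      \<le> ennreal (1 / \<bar>x (snd q) - x (fst q)\<bar>) * (\<integral>\<^sup>+t. ennreal (h t) \<partial>lborel)\<^sup>2"
      by (rule nn_integral_location_scale_pair_le[OF hm h0])
    also have "\<dots> < \<infinity>"
      using hint by (simp add: ennreal_mult_less_top power_less_top_ennreal)
    finally show ?thesis .
  qed
  have "(\<Sum>q\<in>{..<n} \<times> {..<n} - Id. ennreal (4 * (4 / \<delta>) ^ (n - 2)) *
          (\<integral>\<^sup>+\<sigma>\<in>{0<..}. (\<integral>\<^sup>+\<mu>.
             ennreal (h ((x (fst q) - \<mu>) / \<sigma>) * h ((x (snd q) - \<mu>) / \<sigma>) / \<sigma> ^ 3) \<partial>lborel) \<partial>lborel))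
    < \<infinity>"
    using pair_finite by (simp add: ennreal_mult_less_top)
  with nn_integral_location_scale_le_sum_pairs[where x=x and \<delta>=\<delta>, OF hm h0 hb n \<delta> sep] show ?thesis
    by (rule order_le_less_trans)
qed

lemma nn_integral_location_scale_cong_AE:
  fixes f h :: "real \<Rightarrow> real" and x :: "nat \<Rightarrow> real" and n :: nat and \<sigma> :: real
  assumes [measurable]: "f \<in> borel_measurable borel" "h \<in> borel_measurable borel"
    and ae: "AE y in lborel. f y = h y" and \<sigma>: "\<sigma> \<noteq> 0"
  shows "(\<integral>\<^sup>+\<mu>. ennreal ((\<Prod>j<n. 2 / \<sigma> * f ((x j - \<mu>) / \<sigma>)) / \<sigma>) \<partial>lborel)
    = (\<integral>\<^sup>+\<mu>. ennreal ((\<Prod>j<n. 2 / \<sigma> * h ((x j - \<mu>) / \<sigma>)) / \<sigma>) \<partial>lborel)"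
proof -
  have "AE \<mu> in lborel. f ((x j - \<mu>) / \<sigma>) = h ((x j - \<mu>) / \<sigma>)" for j
  proof -
    have "(x j - \<mu>) / \<sigma> = x j / \<sigma> + (- 1 / \<sigma>) * \<mu>" for \<mu>
      by (simp add: diff_divide_distrib)
    then show ?thesis
      using AE_borel_affine[OF _ _ ae, of "- 1 / \<sigma>" "x j / \<sigma>"] \<sigma> by simp
  qed
  then have "AE \<mu> in lborel. \<forall>j\<in>{..<n}. f ((x j - \<mu>) / \<sigma>) = h ((x j - \<mu>) / \<sigma>)"
    by (intro eventually_ball_finite) auto
  then show ?thesis
    by (intro nn_integral_cong_AE) (auto elim!: eventually_mono intro!: prod.cong)
qed

lemma abs_cont_cdf_bounded:
  assumes "abs_cont_cdf G"
  shows "0 \<le> G t" "G t \<le> 1"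
proof -
  obtain M where "real_distribution M" and G: "G = cdf M"
    using assms unfolding abs_cont_cdf_def by blast
  interpret real_distribution M by fact
  show "0 \<le> G t" "G t \<le> 1"
    unfolding G by (rule cdf_nonneg, rule cdf_bounded_prob)
qed

lemma prod_skew_dens_le:
  fixes f G \<omega> :: "real \<Rightarrow> real" and x :: "nat \<Rightarrow> real"
  assumes f0: "\<And>t. 0 \<le> f t" and G0: "\<And>t. 0 \<le> G t" and G1: "\<And>t. G t \<le> 1" and \<sigma>: "\<sigma> > 0"
  shows "(\<Prod>j<n. skew_dens f G \<omega> \<mu> \<sigma> l (x j)) \<le> (\<Prod>j<n. 2 / \<sigma> * f ((x j - \<mu>) / \<sigma>))"
  unfolding skew_dens_def using f0 G0 \<sigma>
  by (intro prod_mono conjI mult_nonneg_nonneg mult_right_le_one_le G1) auto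

lemma nn_integral_skew_posterior_le:
  fixes f G \<omega> p :: "real \<Rightarrow> real" and x :: "nat \<Rightarrow> real" and n :: nat
  assumes [measurable]: "f \<in> borel_measurable borel" and f0: "\<And>t. 0 \<le> f t"
    and G0: "\<And>t. 0 \<le> G t" and G1: "\<And>t. G t \<le> 1"
    and [measurable]: "p \<in> borel_measurable borel" and p0: "\<And>t. 0 \<le> p t"
    and p1: "(\<integral>\<^sup>+t. ennreal (p t) \<partial>lborel) = 1"
  shows "(\<integral>\<^sup>+ l. (\<integral>\<^sup>+ \<sigma>\<in>{0<..}. (\<integral>\<^sup>+ \<mu>.
            ennreal ((\<Prod>j<n. skew_dens f G \<omega> \<mu> \<sigma> l (x j)) * p l / \<sigma>)
          \<partial>lborel) \<partial>lborel) \<partial>lborel)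
    \<le> (\<integral>\<^sup>+\<sigma>\<in>{0<..}. (\<integral>\<^sup>+\<mu>. ennreal ((\<Prod>j<n. 2 / \<sigma> * f ((x j - \<mu>) / \<sigma>)) / \<sigma>) \<partial>lborel) \<partial>lborel)"
    (is "_ \<le> ?Q")
proof -
  have "(\<integral>\<^sup>+ \<sigma>\<in>{0<..}. (\<integral>\<^sup>+ \<mu>. ennreal ((\<Prod>j<n. skew_dens f G \<omega> \<mu> \<sigma> l (x j)) * p l / \<sigma>) \<partial>lborel) \<partial>lborel)
    \<le> (\<integral>\<^sup>+\<sigma>. ennreal (p l) * ((\<integral>\<^sup>+\<mu>. ennreal ((\<Prod>j<n. 2 / \<sigma> * f ((x j - \<mu>) / \<sigma>)) / \<sigma>) \<partial>lborel)
          * indicator {0<..} \<sigma>) \<partial>lborel)" for l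
  proof (intro nn_integral_mono)
    fix \<sigma> :: real
    show "(\<integral>\<^sup>+ \<mu>. ennreal ((\<Prod>j<n. skew_dens f G \<omega> \<mu> \<sigma> l (x j)) * p l / \<sigma>) \<partial>lborel) * indicator {0<..} \<sigma>
      \<le> ennreal (p l) * ((\<integral>\<^sup>+\<mu>. ennreal ((\<Prod>j<n. 2 / \<sigma> * f ((x j - \<mu>) / \<sigma>)) / \<sigma>) \<partial>lborel)
          * indicator {0<..} \<sigma>)"
    proof (cases "\<sigma> > 0")
      case True
      have "(\<integral>\<^sup>+ \<mu>. ennreal ((\<Prod>j<n. skew_dens f G \<omega> \<mu> \<sigma> l (x j)) * p l / \<sigma>) \<partial>lborel)
        \<le> (\<integral>\<^sup>+ \<mu>. ennreal (p l) * ennreal ((\<Prod>j<n. 2 / \<sigma> * f ((x j - \<mu>) / \<sigma>)) / \<sigma>) \<partial>lborel)"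
      proof (intro nn_integral_mono)
        fix \<mu>
        have "(\<Prod>j<n. skew_dens f G \<omega> \<mu> \<sigma> l (x j)) * p l / \<sigma>
          \<le> p l * ((\<Prod>j<n. 2 / \<sigma> * f ((x j - \<mu>) / \<sigma>)) / \<sigma>)"
          using prod_skew_dens_le[where f=f and G=G, OF f0 G0 G1 True] p0[of l] True
          by (subst mult.commute, subst times_divide_eq_right[symmetric])
            (intro mult_left_mono divide_right_mono, auto)
        then show "ennreal ((\<Prod>j<n. skew_dens f G \<omega> \<mu> \<sigma> l (x j)) * p l / \<sigma>)
          \<le> ennreal (p l) * ennreal ((\<Prod>j<n. 2 / \<sigma> * f ((x j - \<mu>) / \<sigma>)) / \<sigma>)"
          using p0[of l] by (simp add: ennreal_mult'[symmetric] ennreal_leI)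
      qed
      also have "\<dots> = ennreal (p l) * (\<integral>\<^sup>+\<mu>. ennreal ((\<Prod>j<n. 2 / \<sigma> * f ((x j - \<mu>) / \<sigma>)) / \<sigma>) \<partial>lborel)"
        by (rule nn_integral_cmult) measurable
      finally show ?thesis using True by simp
    qed simp
  qed
  also have "(\<integral>\<^sup>+\<sigma>. ennreal (p l) * ((\<integral>\<^sup>+\<mu>. ennreal ((\<Prod>j<n. 2 / \<sigma> * f ((x j - \<mu>) / \<sigma>)) / \<sigma>) \<partial>lborel)
          * indicator {0<..} \<sigma>) \<partial>lborel) = ennreal (p l) * ?Q" for l
    by (rule nn_integral_cmult) measurable
  finally have "(\<integral>\<^sup>+ l. (\<integral>\<^sup>+ \<sigma>\<in>{0<..}. (\<integral>\<^sup>+ \<mu>.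
            ennreal ((\<Prod>j<n. skew_dens f G \<omega> \<mu> \<sigma> l (x j)) * p l / \<sigma>)
          \<partial>lborel) \<partial>lborel) \<partial>lborel) \<le> (\<integral>\<^sup>+ l. ennreal (p l) * ?Q \<partial>lborel)"
    by (intro nn_integral_mono)
  also have "\<dots> = ?Q"
    by (subst nn_integral_multc) (simp_all add: p1)
  finally show ?thesis .
qed

theorem theorem2:
  fixes f G \<omega> p :: "real \<Rightarrow> real" and x :: "nat \<Rightarrow> real" and n :: nat
  assumes f: "scale_mixture_of_normals f"
    and G: "abs_cont_cdf G" and G_sym: "\<forall>t. G (- t) = 1 - G t"
    and \<omega>_odd: "\<forall>t. \<omega> (- t) = - \<omega> t" and \<omega>_pos: "\<forall>t>0. \<omega> t > 0"
    and p: "prob_density p"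
    and n: "n \<ge> 2"
    and distinct: "inj_on x {..<n}"
  shows "(\<integral>\<^sup>+ l. (\<integral>\<^sup>+ \<sigma>\<in>{0<..}. (\<integral>\<^sup>+ \<mu>.
            ennreal ((\<Prod>j<n. skew_dens f G \<omega> \<mu> \<sigma> l (x j)) * p l / \<sigma>)
          \<partial>lborel) \<partial>lborel) \<partial>lborel) < \<infinity>"
proof -
  have fm: "f \<in> borel_measurable borel" and f0: "\<And>t. 0 \<le> f t"
    using f unfolding scale_mixture_of_normals_def by auto
  obtain h where hm: "h \<in> borel_measurable borel" and h0: "\<And>t. 0 \<le> h t"
    and hb: "\<And>y. y \<noteq> 0 \<Longrightarrow> h y \<le> 1 / \<bar>y\<bar>" and h1: "(\<integral>\<^sup>+t. ennreal (h t) \<partial>lborel) \<le> 1"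
    and fh: "AE y in lborel. f y = h y"
    using scale_mixture_of_normals_dominated[OF f] by blast
  have hfin: "(\<integral>\<^sup>+t. ennreal (h t) \<partial>lborel) < \<infinity>"
    using h1 by (simp add: order_le_less_trans)
  have "(\<integral>\<^sup>+ l. (\<integral>\<^sup>+ \<sigma>\<in>{0<..}. (\<integral>\<^sup>+ \<mu>.
            ennreal ((\<Prod>j<n. skew_dens f G \<omega> \<mu> \<sigma> l (x j)) * p l / \<sigma>)
          \<partial>lborel) \<partial>lborel) \<partial>lborel)
    \<le> (\<integral>\<^sup>+\<sigma>\<in>{0<..}. (\<integral>\<^sup>+\<mu>. ennreal ((\<Prod>j<n. 2 / \<sigma> * f ((x j - \<mu>) / \<sigma>)) / \<sigma>) \<partial>lborel) \<partial>lborel)"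
    using p abs_cont_cdf_bounded[OF G] unfolding prob_density_def
    by (intro nn_integral_skew_posterior_le fm f0) auto
  also have "\<dots> = (\<integral>\<^sup>+\<sigma>\<in>{0<..}. (\<integral>\<^sup>+\<mu>. ennreal ((\<Prod>j<n. 2 / \<sigma> * h ((x j - \<mu>) / \<sigma>)) / \<sigma>) \<partial>lborel) \<partial>lborel)"
    using nn_integral_location_scale_cong_AE[OF fm hm fh]
    by (intro nn_integral_cong) (simp add: indicator_def)
  also have "\<dots> < \<infinity>"
    using hm h0 hb hfin n distinct by (rule nn_integral_location_scale_likelihood_finite)
  finally show ?thesis .
qed

end
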